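(* Let $\mathcal{G}_{N,M}=\{G_s\}$ be the set of simple undirected networks on node set $\{1,\dots,N\}$ with exactly $M$ edges (no self-edges, no repeated edges), and let $G^{(0)}\in\mathcal{G}_{N,M}$. For $t\ge 0$ let $\mathbf{G}^{(t)}=(\mathcal{G}_{N,M},\pi^{(t)})$ be the random-network ensemble where $\pi^{(t)}_s$ is the probability that the network obtained from $G^{(0)}$ by $t$ successive independent uniform rewires equals $G_s$. Then $\lim_{t\to\infty}\mathbf{G}^{(t)}=\mathbf{G}_{N,M}$, where $\mathbf{G}_{N,M}=(\mathcal{G}_{N,M},\pi)$ is the Erdős–Rényi ensemble with $\pi_s=1/|\mathcal{G}_{N,M}|$ for all $s$.
   Context: A random-network ensemble is a pair $(\{G_s\},\pi)$ of a finite set of networks and a probability distribution $\pi$ on it. A sequence of ensembles $\mathbf{G}^{(t)}=(\{G_s\},\pi^{(t)})$ converges to $\mathbf{G}=(\{G_s\},\pi)$ iff $\pi^{(t)}\to\pi$. Uniform rewiring is the stochastic map on $\mathcal{G}_{N,M}$ taking a network with edge set $\mathcal{E}$ to the network with edge set $(\mathcal{E}\setminus\{(i,j)\})\cup\{(i',j')\}$, where $(i,j)$ is chosen uniformly at random from $\mathcal{E}$, and then $(i',j')$ is chosen uniformly at random among the $N(N-1)/2-M+1$ node pairs that are not edges of $\mathcal{E}\setminus\{(i,j)\}$ (re-selecting $(i,j)$ allowed). *)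

theory Defs
  imports "HOL-Probability.Probability"
begin

definition node_pairs :: "nat \<Rightarrow> nat set set" where
  "node_pairs N = {{i, j} | i j. i \<in> {1..N} \<and> j \<in> {1..N} \<and> i \<noteq> j}"

definition networks :: "nat \<Rightarrow> nat \<Rightarrow> nat set set set" where
  "networks N M = {E. E \<subseteq> node_pairs N \<and> card E = M}"

text \<open>Uniform rewiring: remove a uniformly chosen edge, then add a uniformly chosen
  pair among the non-edges of the remaining network (re-selecting the removed one allowed).
  For the empty network (M = 0) there is no edge to remove; it is left unchanged.\<close>
definition rewire :: "nat \<Rightarrow> nat set set \<Rightarrow> nat set set pmf" where
  "rewire N E = (if E = {} then return_pmf E else
     do { e \<leftarrow> pmf_of_set E;
          e' \<leftarrow> pmf_of_set (node_pairs N - (E - {e}));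
          return_pmf ((E - {e}) \<union> {e'}) })"

definition rewire_iter :: "nat \<Rightarrow> nat set set \<Rightarrow> nat \<Rightarrow> nat set set pmf" where
  "rewire_iter N G0 t = ((\<lambda>p. bind_pmf p (rewire N)) ^^ t) (return_pmf G0)"

end

theory Submission
  imports Defs
begin

text \<open>
  Uniform rewiring is a symmetric Markov chain on the networks with \<open>M\<close> edges: the move that
  deletes \<open>e\<close> and adds \<open>e'\<close> turns \<open>E\<close> into \<open>F\<close> exactly when deleting \<open>e'\<close> and adding \<open>e\<close> turns
  \<open>F\<close> into \<open>E\<close>, and every move has the same probability \<open>c = 1 / (M (|pairs| - M + 1))\<close>.
  Hence the transition matrix is doubly stochastic. Moreover, any network can be turned into
  any other within \<open>M\<close> rewires by exchanging one differing edge at a time (and re-selecting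
  the removed edge once nothing differs), so every entry of the \<open>M\<close>-step matrix is at least
  \<open>\<delta> = c\<^sup>M\<close>. With these two facts, \<open>M\<close> steps shrink the maximal deviation from the uniform
  distribution by the factor \<open>1 - |G(N,M)| \<delta> < 1\<close>, which gives geometric convergence.
\<close>

section \<open>Convergence of doubly stochastic kernels\<close>

definition kernel_iter :: "('a \<Rightarrow> 'a pmf) \<Rightarrow> nat \<Rightarrow> 'a pmf \<Rightarrow> 'a pmf" where
  "kernel_iter K t p = ((\<lambda>q. bind_pmf q K) ^^ t) p"

lemma kernel_iter_0 [simp]: "kernel_iter K 0 p = p"
  by (simp add: kernel_iter_def)

lemma kernel_iter_Suc [simp]: "kernel_iter K (Suc t) p = kernel_iter K t p \<bind> K"
  by (simp add: kernel_iter_def)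

lemma kernel_iter_add:
  "kernel_iter K (m + t) p = kernel_iter K t p \<bind> (\<lambda>x. kernel_iter K m (return_pmf x))"
  by (induction m) (simp_all add: bind_return_pmf' bind_assoc_pmf)

lemma set_pmf_kernel_iter_subset:
  assumes "set_pmf p \<subseteq> S" and "\<And>x. x \<in> S \<Longrightarrow> set_pmf (K x) \<subseteq> S"
  shows "set_pmf (kernel_iter K t p) \<subseteq> S"
  using assms by (induction t) (auto simp: set_bind_pmf)

lemma pmf_bind_eq_sum:
  assumes "finite A" and "set_pmf p \<subseteq> A"
  shows "pmf (p \<bind> f) y = (\<Sum>x\<in>A. pmf p x * pmf (f x) y)"
  unfolding pmf_bind
  by (subst integral_measure_pmf_real[OF assms(1)]) (use assms(2) in \<open>auto simp: mult.commute\<close>)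

lemma pmf_bind_ge: "pmf p x * pmf (f x) y \<le> pmf (p \<bind> f) y"
proof -
  have "ennreal (pmf p x * pmf (f x) y) = (\<integral>\<^sup>+ z. ennreal (pmf (f z) y) * indicator {x} z \<partial>measure_pmf p)"
    by (simp add: ennreal_mult' mult.commute emeasure_pmf_single)
  also have "\<dots> \<le> (\<integral>\<^sup>+ z. ennreal (pmf (f z) y) \<partial>measure_pmf p)"
    by (intro nn_integral_mono) (simp add: indicator_def)
  also have "\<dots> = ennreal (pmf (p \<bind> f) y)"
    by (simp add: ennreal_pmf_bind)
  finally show ?thesis by (simp add: ennreal_le_iff2) auto
qed

lemma weighted_average_deviation_le:
  fixes w f :: "'a \<Rightarrow> real" and \<delta> b :: real
  assumes fin: "finite S" and w_ge: "\<And>x. x \<in> S \<Longrightarrow> w x \<ge> \<delta>" and w_sum: "sum w S = 1"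
    and f_sum: "sum f S = 1" and f_dev: "\<And>x. x \<in> S \<Longrightarrow> \<bar>f x - 1 / card S\<bar> \<le> b"
    and ne: "S \<noteq> {}"
  shows "\<bar>(\<Sum>x\<in>S. w x * f x) - 1 / card S\<bar> \<le> (1 - card S * \<delta>) * b"
proof -
  let ?n = "real (card S)"
  have n_pos: "?n > 0" using fin ne by (simp add: card_gt_0_iff)
  \<comment> \<open>Both \<open>w\<close> and \<open>f\<close> sum to 1, so the constants \<open>\<delta>\<close> and \<open>1 / n\<close> may be subtracted for free.\<close>
  have "(\<Sum>x\<in>S. (w x - \<delta>) * (f x - 1 / ?n))
      = (\<Sum>x\<in>S. w x * f x - w x / ?n - \<delta> * f x + \<delta> / ?n)"
    by (intro sum.cong refl) (simp add: algebra_simps diff_divide_distrib)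
  also have "\<dots> = (\<Sum>x\<in>S. w x * f x) - (\<Sum>x\<in>S. w x) / ?n - \<delta> * (\<Sum>x\<in>S. f x) + ?n * (\<delta> / ?n)"
    by (simp add: sum.distrib sum_subtractf sum_distrib_left sum_divide_distrib)
  also have "\<dots> = (\<Sum>x\<in>S. w x * f x) - 1 / ?n"
    using w_sum f_sum n_pos by simp
  finally have eq: "(\<Sum>x\<in>S. w x * f x) - 1 / ?n = (\<Sum>x\<in>S. (w x - \<delta>) * (f x - 1 / ?n))" ..
  have "\<bar>\<Sum>x\<in>S. (w x - \<delta>) * (f x - 1 / ?n)\<bar> \<le> (\<Sum>x\<in>S. (w x - \<delta>) * \<bar>f x - 1 / ?n\<bar>)"
    using sum_abs[of "\<lambda>x. (w x - \<delta>) * (f x - 1 / ?n)" S] w_ge by (simp add: abs_mult)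
  also have "\<dots> \<le> (\<Sum>x\<in>S. (w x - \<delta>) * b)"
    using w_ge f_dev by (intro sum_mono mult_left_mono) auto
  also have "\<dots> = (1 - ?n * \<delta>) * b"
    using w_sum by (simp add: sum_distrib_right[symmetric] sum_subtractf)
  finally show ?thesis using eq by simp
qed

locale doubly_stochastic_kernel =
  fixes S :: "'a set" and K :: "'a \<Rightarrow> 'a pmf"
  assumes finite_S: "finite S"
    and set_pmf_K: "\<And>x. x \<in> S \<Longrightarrow> set_pmf (K x) \<subseteq> S"
    and column_sum: "\<And>y. y \<in> S \<Longrightarrow> (\<Sum>x\<in>S. pmf (K x) y) = 1"
begin

lemma set_pmf_iter:
  "set_pmf p \<subseteq> S \<Longrightarrow> set_pmf (kernel_iter K t p) \<subseteq> S"
  using set_pmf_kernel_iter_subset set_pmf_K by blast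

lemma iter_column_sum:
  assumes "y \<in> S"
  shows "(\<Sum>x\<in>S. pmf (kernel_iter K m (return_pmf x)) y) = 1"
  using assms
proof (induction m arbitrary: y)
  case 0
  then show ?case using finite_S by (simp add: indicator_def)
next
  case (Suc m)
  have "(\<Sum>x\<in>S. pmf (kernel_iter K (Suc m) (return_pmf x)) y)
      = (\<Sum>x\<in>S. \<Sum>z\<in>S. pmf (kernel_iter K m (return_pmf x)) z * pmf (K z) y)"
    by (intro sum.cong refl) (simp add: pmf_bind_eq_sum[OF finite_S set_pmf_iter])
  also have "\<dots> = (\<Sum>z\<in>S. (\<Sum>x\<in>S. pmf (kernel_iter K m (return_pmf x)) z) * pmf (K z) y)"
    by (subst sum.swap) (simp add: sum_distrib_right)
  also have "\<dots> = 1"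
    using Suc.IH column_sum[OF Suc.prems] by simp
  finally show ?case .
qed

lemma iter_deviation_contract:
  fixes \<delta> b :: real
  assumes p: "set_pmf p \<subseteq> S"
    and minor: "\<And>x y. x \<in> S \<Longrightarrow> y \<in> S \<Longrightarrow> pmf (kernel_iter K m (return_pmf x)) y \<ge> \<delta>"
    and dev: "\<And>x. x \<in> S \<Longrightarrow> \<bar>pmf (kernel_iter K t p) x - 1 / card S\<bar> \<le> b"
    and y: "y \<in> S"
  shows "\<bar>pmf (kernel_iter K (m + t) p) y - 1 / card S\<bar> \<le> (1 - card S * \<delta>) * b"
proof -
  have "pmf (kernel_iter K (m + t) p) y
      = (\<Sum>x\<in>S. pmf (kernel_iter K m (return_pmf x)) y * pmf (kernel_iter K t p) x)"
    by (simp add: kernel_iter_add pmf_bind_eq_sum[OF finite_S set_pmf_iter[OF p]] mult.commute)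
  also have "\<bar>\<dots> - 1 / card S\<bar> \<le> (1 - card S * \<delta>) * b"
    using y by (intro weighted_average_deviation_le finite_S minor iter_column_sum
        sum_pmf_eq_1 set_pmf_iter p dev) auto
  finally show ?thesis .
qed

lemma iter_deviation_le_power:
  fixes \<delta> :: real
  assumes p: "set_pmf p \<subseteq> S"
    and minor: "\<And>x y. x \<in> S \<Longrightarrow> y \<in> S \<Longrightarrow> pmf (kernel_iter K m (return_pmf x)) y \<ge> \<delta>"
    and x: "x \<in> S"
  shows "\<bar>pmf (kernel_iter K (j * m + r) p) x - 1 / card S\<bar> \<le> (1 - card S * \<delta>) ^ j"
  using x
proof (induction j arbitrary: x)
  case 0
  have "card S > 0" using finite_S 0 card_gt_0_iff by blast
  then have "0 \<le> 1 / real (card S)" "1 / real (card S) \<le> 1" by simp_all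
  moreover have "0 \<le> pmf (kernel_iter K r p) x" "pmf (kernel_iter K r p) x \<le> 1"
    by (simp_all add: pmf_le_1)
  ultimately show ?case unfolding power_0 mult_0 add_0 abs_le_iff by linarith
next
  case (Suc j)
  then show ?case
    using iter_deviation_contract[OF p minor, of "j * m + r" "(1 - card S * \<delta>) ^ j" x]
    by (simp add: add.assoc)
qed

theorem iter_tendsto_uniform:
  fixes \<delta> :: real
  assumes p: "set_pmf p \<subseteq> S" and m: "m > 0" and \<delta>: "\<delta> > 0"
    and minor: "\<And>x y. x \<in> S \<Longrightarrow> y \<in> S \<Longrightarrow> pmf (kernel_iter K m (return_pmf x)) y \<ge> \<delta>"
    and y: "y \<in> S"
  shows "(\<lambda>t. pmf (kernel_iter K t p) y) \<longlonglongrightarrow> 1 / card S"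
proof -
  define q where "q = 1 - card S * \<delta>"
  have "card S * \<delta> = (\<Sum>x\<in>S. \<delta>)" by simp
  also have "\<dots> \<le> (\<Sum>x\<in>S. pmf (kernel_iter K m (return_pmf x)) y)"
    using minor y by (intro sum_mono) auto
  finally have "card S * \<delta> \<le> 1" using iter_column_sum[OF y] by simp
  moreover have "card S > 0" using finite_S y card_gt_0_iff by blast
  ultimately have q: "0 \<le> q" "q < 1" using \<delta> by (auto simp: q_def)
  have dev: "\<bar>pmf (kernel_iter K t p) y - 1 / card S\<bar> \<le> q ^ (t div m)" for t
    using iter_deviation_le_power[OF p minor y, of "t div m" "t mod m"]
    by (simp add: q_def div_mult_mod_eq)
  have "(\<lambda>t. q ^ (t div m)) \<longlonglongrightarrow> 0"
    using filterlim_compose[OF LIMSEQ_realpow_zero[OF q] filterlim_at_top_div_const_nat[OF m]] .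
  then have "(\<lambda>t. pmf (kernel_iter K t p) y - 1 / card S) \<longlonglongrightarrow> 0"
    by (rule Lim_null_comparison[rotated]) (simp add: dev)
  then show ?thesis
    by (simp add: LIM_zero_iff)
qed

end

section \<open>Uniform rewiring\<close>

lemma finite_node_pairs: "finite (node_pairs N)"
proof -
  have "node_pairs N \<subseteq> Pow {1..N}" unfolding node_pairs_def by auto
  then show ?thesis by (rule finite_subset) simp
qed

lemma finite_networks: "finite (networks N M)"
proof -
  have "networks N M \<subseteq> Pow (node_pairs N)" unfolding networks_def by auto
  then show ?thesis using finite_node_pairs by (simp add: finite_subset)
qed

lemma networks_memberD:
  assumes "E \<in> networks N M"
  shows "E \<subseteq> node_pairs N" "finite E" "card E = M"
  using assms finite_node_pairs finite_subset unfolding networks_def by blast+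

lemma networks_0: "networks N 0 = {{}}"
proof -
  have "E = {}" if "E \<in> networks N 0" for E
    using networks_memberD(2,3)[OF that] by simp
  then show ?thesis by (auto simp: networks_def)
qed

lemma networks_eq_if_subset:
  "E \<in> networks N M \<Longrightarrow> F \<in> networks N M \<Longrightarrow> E \<subseteq> F \<Longrightarrow> E = F"
  by (metis card_subset_eq networks_memberD(2,3))

lemma card_free_pairs:
  assumes E: "E \<in> networks N M" and e: "e \<in> E"
  shows "card (node_pairs N - (E - {e})) = card (node_pairs N) - M + 1"
proof -
  note E' = networks_memberD[OF E]
  have "M \<le> card (node_pairs N)" using E' card_mono finite_node_pairs by blast
  moreover have "card (E - {e}) = M - 1" using E'(2,3) e by simp
  moreover have "M \<ge> 1" using E'(2,3) e by (auto simp: Suc_le_eq card_gt_0_iff)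
  moreover have "card (node_pairs N - (E - {e})) = card (node_pairs N) - card (E - {e})"
    using E'(1) finite_node_pairs by (intro card_Diff_subset) (auto intro: finite_subset)
  ultimately show ?thesis by simp
qed

lemma set_pmf_rewire_subset:
  assumes E: "E \<in> networks N M"
  shows "set_pmf (rewire N E) \<subseteq> networks N M"
proof (cases "E = {}")
  case True
  then show ?thesis using E by (simp add: rewire_def)
next
  case False
  note E' = networks_memberD[OF E]
  show ?thesis
  proof
    fix F assume "F \<in> set_pmf (rewire N E)"
    moreover have "node_pairs N - (E - {e}) \<noteq> {}" if "e \<in> E" for e
      using that E'(1) by auto
    ultimately obtain e e' where e: "e \<in> E" and e': "e' \<in> node_pairs N - (E - {e})"
      and F: "F = (E - {e}) \<union> {e'}"
      using False E' finite_node_pairs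
      by (auto simp: rewire_def set_bind_pmf set_pmf_of_set)
    have "card F = card (E - {e}) + 1" using F e' E'(2) by simp
    also have "\<dots> = M" using E'(2,3) e card_gt_0_iff[of E] by auto
    finally show "F \<in> networks N M" using F e' E' unfolding networks_def by auto
  qed
qed

definition rewire_moves :: "nat \<Rightarrow> nat set set \<Rightarrow> nat set set \<Rightarrow> (nat set \<times> nat set) set" where
  "rewire_moves N E F = {(e, e'). e \<in> E \<and> e' \<in> node_pairs N - (E - {e}) \<and> (E - {e}) \<union> {e'} = F}"

definition rewire_move_prob :: "nat \<Rightarrow> nat \<Rightarrow> real" where
  "rewire_move_prob N M = 1 / (real M * real (card (node_pairs N) - M + 1))"

lemma rewire_move_prob_pos: "M > 0 \<Longrightarrow> rewire_move_prob N M > 0"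
  by (simp add: rewire_move_prob_def)

lemma finite_rewire_moves: "finite E \<Longrightarrow> finite (rewire_moves N E F)"
  by (rule finite_subset[of _ "E \<times> node_pairs N"]) (auto simp: rewire_moves_def finite_node_pairs)

lemma pmf_rewire:
  assumes E: "E \<in> networks N M" and M: "M > 0"
  shows "pmf (rewire N E) F = card (rewire_moves N E F) * rewire_move_prob N M"
proof -
  note E' = networks_memberD[OF E]
  let ?A = "\<lambda>e. node_pairs N - (E - {e})" and ?D = "real (card (node_pairs N) - M + 1)"
  let ?moves = "\<lambda>e. {e' \<in> ?A e. (E - {e}) \<union> {e'} = F}"
  have inner: "pmf (pmf_of_set (?A e) \<bind> (\<lambda>e'. return_pmf ((E - {e}) \<union> {e'}))) F = card (?moves e) / ?D"
    if e: "e \<in> E" for e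
  proof -
    have "?A e \<noteq> {}" using e E'(1) by auto
    then have "pmf (pmf_of_set (?A e) \<bind> (\<lambda>e'. return_pmf ((E - {e}) \<union> {e'}))) F
        = (\<Sum>e'\<in>?A e. indicator {F} ((E - {e}) \<union> {e'})) / card (?A e)"
      using finite_node_pairs by (simp add: pmf_bind integral_pmf_of_set)
    also have "(\<Sum>e'\<in>?A e. indicator {F} ((E - {e}) \<union> {e'})) = real (card (?moves e))"
      using finite_node_pairs by (simp add: indicator_def sum.If_cases Int_def)
    finally show ?thesis using card_free_pairs[OF E e] by simp
  qed
  have "E \<noteq> {}" using E' M by auto
  then have "pmf (rewire N E) F = (\<Sum>e\<in>E. card (?moves e) / ?D) / card E"
    using E'(2) inner by (simp add: rewire_def pmf_bind integral_pmf_of_set)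
  also have "\<dots> = (\<Sum>e\<in>E. card (?moves e)) / (M * ?D)"
    using E'(3) by (simp add: sum_divide_distrib mult.commute)
  also have "(\<Sum>e\<in>E. card (?moves e)) = card (rewire_moves N E F)"
  proof -
    have "rewire_moves N E F = Sigma E ?moves" by (auto simp: rewire_moves_def)
    then show ?thesis using E'(2) finite_node_pairs by (simp add: card_SigmaI)
  qed
  finally show ?thesis by (simp add: rewire_move_prob_def)
qed

lemma swap_rewire_moves_subset:
  assumes E: "E \<in> networks N M"
  shows "prod.swap ` rewire_moves N E F \<subseteq> rewire_moves N F E"
proof
  fix z assume "z \<in> prod.swap ` rewire_moves N E F"
  then obtain e e' where z: "z = (e', e)" and "(e, e') \<in> rewire_moves N E F" by auto
  then have e: "e \<in> E" and e': "e' \<in> node_pairs N" "e' \<notin> E - {e}" and F: "(E - {e}) \<union> {e'} = F"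
    unfolding rewire_moves_def by simp_all
  have "F - {e'} = E - {e}" using F e'(2) by blast
  moreover have "e \<in> node_pairs N" using e networks_memberD(1)[OF E] by blast
  moreover have "e' \<in> F" using F by blast
  ultimately show "z \<in> rewire_moves N F E"
    using e z unfolding rewire_moves_def by auto
qed

lemma pmf_rewire_sym:
  assumes E: "E \<in> networks N M" and F: "F \<in> networks N M"
  shows "pmf (rewire N E) F = pmf (rewire N F) E"
proof (cases "M = 0")
  case True
  then show ?thesis using E F by (simp add: networks_0)
next
  case False
  have "card (rewire_moves N E F) \<le> card (rewire_moves N F E)"
    using card_mono[OF finite_rewire_moves swap_rewire_moves_subset[OF E]] networks_memberD(2)[OF F]
    by (simp add: card_image)
  moreover have "card (rewire_moves N F E) \<le> card (rewire_moves N E F)"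
    using card_mono[OF finite_rewire_moves swap_rewire_moves_subset[OF F]] networks_memberD(2)[OF E]
    by (simp add: card_image)
  ultimately have "card (rewire_moves N E F) = card (rewire_moves N F E)" by simp
  then show ?thesis using pmf_rewire[OF E] pmf_rewire[OF F] False by simp
qed

lemma rewire_column_sum:
  assumes F: "F \<in> networks N M"
  shows "(\<Sum>E\<in>networks N M. pmf (rewire N E) F) = 1"
  using sum_pmf_eq_1[OF finite_networks set_pmf_rewire_subset[OF F]] pmf_rewire_sym[OF _ F]
  by simp

lemma doubly_stochastic_rewire: "doubly_stochastic_kernel (networks N M) (rewire N)"
  by unfold_locales (simp_all add: finite_networks set_pmf_rewire_subset rewire_column_sum)

lemma pmf_rewire_ge:
  assumes E: "E \<in> networks N M" and M: "M > 0"
    and e: "e \<in> E" and e': "e' \<in> node_pairs N - (E - {e})"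
  shows "pmf (rewire N E) ((E - {e}) \<union> {e'}) \<ge> rewire_move_prob N M"
proof -
  have "(e, e') \<in> rewire_moves N E ((E - {e}) \<union> {e'})"
    using e e' by (auto simp: rewire_moves_def)
  then have "card (rewire_moves N E ((E - {e}) \<union> {e'})) \<ge> 1"
    using finite_rewire_moves[OF networks_memberD(2)[OF E]] by (metis One_nat_def Suc_leI card_gt_0_iff empty_iff)
  then show ?thesis using pmf_rewire[OF E M] rewire_move_prob_pos[OF M, of N]
    by (simp add: mult_le_cancel_right1)
qed

lemma rewire_step_towards:
  assumes E: "E \<in> networks N M" and F: "F \<in> networks N M" and M: "M > 0"
    and d: "card (E - F) \<le> Suc m"
  obtains G where "pmf (rewire N E) G \<ge> rewire_move_prob N M"
    and "card (G - F) \<le> m"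
proof (cases "E = F")
  case True
  \<comment> \<open>Re-selecting the removed edge leaves \<open>E\<close> unchanged.\<close>
  obtain a where a: "a \<in> E" using networks_memberD(3)[OF E] M by fastforce
  have "(E - {a}) \<union> {a} = E" using a by blast
  moreover have "a \<in> node_pairs N - (E - {a})" using networks_memberD(1)[OF E] a by auto
  ultimately show ?thesis using that pmf_rewire_ge[OF E M a] True by fastforce
next
  case False
  obtain a where a: "a \<in> E" "a \<notin> F" using networks_eq_if_subset[OF E F] False by blast
  obtain b where b: "b \<in> F" "b \<notin> E" using networks_eq_if_subset[OF F E] False by blast
  have b_free: "b \<in> node_pairs N - (E - {a})" using networks_memberD(1)[OF F] b by auto
  have "((E - {a}) \<union> {b}) - F = (E - F) - {a}" using b by blast
  then have "card (((E - {a}) \<union> {b}) - F) \<le> m"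
    using a d networks_memberD(2)[OF E] by simp
  then show ?thesis using that pmf_rewire_ge[OF E M a(1) b_free] by blast
qed

lemma pmf_rewire_iter_ge:
  assumes M: "M > 0"
  shows "E \<in> networks N M \<Longrightarrow> F \<in> networks N M \<Longrightarrow> card (E - F) \<le> m \<Longrightarrow>
    pmf (kernel_iter (rewire N) m (return_pmf E)) F \<ge> rewire_move_prob N M ^ m"
proof (induction m arbitrary: E)
  case 0
  then show ?case using networks_eq_if_subset networks_memberD(2) by fastforce
next
  case (Suc m)
  let ?c = "rewire_move_prob N M"
  obtain G where G: "pmf (rewire N E) G \<ge> ?c" "card (G - F) \<le> m"
    using rewire_step_towards[OF Suc.prems(1,2) M Suc.prems(3)] by blast
  have "?c > 0" using rewire_move_prob_pos[OF M] .
  then have "pmf (rewire N E) G \<noteq> 0" using G(1) by linarith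
  then have "G \<in> set_pmf (rewire N E)" by (simp add: set_pmf_iff)
  then have "G \<in> networks N M" using set_pmf_rewire_subset[OF Suc.prems(1)] by blast
  then have "?c ^ m \<le> pmf (kernel_iter (rewire N) m (return_pmf G)) F"
    using G(2) Suc.IH[OF _ Suc.prems(2)] by blast
  then have "?c * ?c ^ m \<le> pmf (rewire N E) G * pmf (kernel_iter (rewire N) m (return_pmf G)) F"
    using G(1) \<open>?c > 0\<close> by (intro mult_mono) auto
  also have "\<dots> \<le> pmf (kernel_iter (rewire N) (m + 1) (return_pmf E)) F"
    unfolding kernel_iter_add by (simp add: bind_return_pmf) (rule pmf_bind_ge)
  finally show ?case by simp
qed

lemma rewire_iter_eq_kernel_iter: "rewire_iter N G0 t = kernel_iter (rewire N) t (return_pmf G0)"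
  by (simp add: rewire_iter_def kernel_iter_def)

theorem corollary3p4:
  fixes N M :: nat and G0 :: "nat set set"
  assumes "G0 \<in> networks N M"
  shows "\<forall>G \<in> networks N M.
           (\<lambda>t. pmf (rewire_iter N G0 t) G) \<longlonglongrightarrow> 1 / real (card (networks N M))"
proof (cases "M = 0")
  case True
  then have "G0 = {}" using assms by (simp add: networks_0)
  then have "rewire_iter N G0 t = return_pmf {}" for t
    by (induction t) (simp_all add: rewire_iter_eq_kernel_iter rewire_def bind_return_pmf)
  then show ?thesis using True by (simp add: networks_0)
next
  case False
  interpret doubly_stochastic_kernel "networks N M" "rewire N"
    by (rule doubly_stochastic_rewire)
  have "pmf (kernel_iter (rewire N) M (return_pmf E)) F \<ge> rewire_move_prob N M ^ M"
    if E: "E \<in> networks N M" and F: "F \<in> networks N M" for E F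
  proof -
    have "card (E - F) \<le> M" using networks_memberD(2,3)[OF E] by (metis Diff_subset card_mono)
    then show ?thesis using pmf_rewire_iter_ge False E F by simp
  qed
  then show ?thesis
    using iter_tendsto_uniform[of "return_pmf G0" M "rewire_move_prob N M ^ M"]
      assms False rewire_move_prob_pos
    by (simp add: rewire_iter_eq_kernel_iter)
qed

end
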